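(* Let $N\ge 1$ and let $A=(A_1,\dots,A_{2N})\in(\mathbb{R}_{>0})^{2N}$ satisfy $\sum_{l=1}^N A_{2l}<\sum_{l=1}^N A_{2l-1}$ and the highest weight condition. Run Algorithm I on $x^{(1)}=A$, producing $u\ge1$ and pairs $(\mu^{(i)},\nu^{(i)})_{1\le i\le u}$, and put $\lambda^{(i)}=\sum_{l=1}^{i}\mu^{(l)}$. Let $\ell_1\le\ell_2\le\cdots\le\ell_N$ be the list consisting of $\lambda^{(1)}$ repeated $\nu^{(1)}$ times, followed by $\lambda^{(2)}$ repeated $\nu^{(2)}$ times, ..., followed by $\lambda^{(u)}$ repeated $\nu^{(u)}$ times (this list has exactly $N$ terms). Then for every $1\le k\le N$, $$\sum_{j=1}^{k}\ell_j=\min_{\substack{1\le i_1\triangleleft i_2\triangleleft\cdots\triangleleft i_k\le 2N\\ (i_1,i_k)\neq(1,2N)}}\big(A_{i_1}+A_{i_2}+\cdots+A_{i_k}\big)=:H_k.$$ (Equivalently: the Young diagram with $\nu^{(i)}$ rows of length $\lambda^{(i)}$ has, below height $k$ from its bottom, area $H_k$, the $k$th conserved quantity of the tropical periodic Toda lattice.)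
   Context: For integers $i,j$, $i\triangleleft j$ means $i+1<j$; the minimum runs over index tuples $1\le i_1<\dots<i_k\le 2N$ with consecutive indices differing by at least $2$, excluding tuples with $i_1=1$ and $i_k=2N$ simultaneously. Highest weight condition: a sequence $x_1,\dots,x_{2n}$ of nonnegative reals satisfies it if $\sum_{i=1}^k(x_{2i-1}-x_{2i})\ge0$ for all $1\le k\le n$. Algorithm I. Set $N^{(1)}=N$, $x^{(1)}=A$. Given $x^{(i)}=(x^{(i)}_1,\dots,x^{(i)}_{2N^{(i)}})$ of positive reals satisfying the highest weight condition: let $\mu^{(i)}=\min_j x^{(i)}_j$ and $y^{(i)}_j=x^{(i)}_j-\mu^{(i)}$. In the (linear, non-cyclic) array $y^{(i)}_1,\dots,y^{(i)}_{2N^{(i)}}$ consider the maximal runs of consecutive zeros (a lone zero counts as a run); say there are $k^{(i)}$ runs with lengths $n^{(i)}_1,\dots,n^{(i)}_{k^{(i)}}$ (from left to right). Let $N^{(i+1)}=N^{(i)}-\sum_{j}\lceil n^{(i)}_j/2\rceil$ and $\nu^{(i)}=N^{(i)}-N^{(i+1)}$. If $N^{(i+1)}=0$, stop and set $u=i$. Otherwise form $x^{(i+1)}$ from $y^{(i)}$ as follows: (a) if a run of zeros is at the left end of the array, delete it (its length is even); (b) for every run of zeros lying between positive entries $a,b$ (as $\dots,a,0,\dots,0,b,\dots$), delete the zeros if the run length is even, and if it is odd delete the zeros and also replace $a,b$ by the single entry $a+b$; (c) if a run of zeros is at the right end, preceded by a positive entry $a$, delete the zeros, and if its length is odd also delete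 $a$ and add $a$ to the first entry of the resulting array. The result is an array $x^{(i+1)}$ of $2N^{(i+1)}$ positive reals satisfying the highest weight condition; repeat. *)

theory Defs
  imports Complex_Main
begin

(* Arrays x_1..x_{2N} are real lists; x_i is  x ! (i - 1). *)

definition highest_weight :: "real list \<Rightarrow> bool" where
  "highest_weight x \<longleftrightarrow>
     (\<forall>k\<in>{1..length x div 2}. (\<Sum>i=1..k. x ! (2*i - 2) - x ! (2*i - 1)) \<ge> 0)"

(* lengths of the maximal runs of consecutive zeros, left to right;
   the first argument counts the zeros of the current run *)
fun zruns_aux :: "nat \<Rightarrow> real list \<Rightarrow> nat list" where
  "zruns_aux c [] = (if c > 0 then [c] else [])"
| "zruns_aux c (v # vs) =
     (if v = 0 then zruns_aux (Suc c) vs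
      else if c > 0 then c # zruns_aux 0 vs else zruns_aux 0 vs)"

definition zero_runs :: "real list \<Rightarrow> nat list" where
  "zero_runs y = zruns_aux 0 y"

definition nu_of :: "real list \<Rightarrow> nat" where
  "nu_of y = sum_list (map (\<lambda>n. (n + 1) div 2) (zero_runs y))"

(* split an array starting with a positive entry into blocks (p, z):
   a positive entry p followed by exactly z zeros *)
function blocks :: "real list \<Rightarrow> (real \<times> nat) list" where
  "blocks [] = []"
| "blocks (v # vs) = (v, length (takeWhile (\<lambda>w. w = 0) vs)) # blocks (dropWhile (\<lambda>w. w = 0) vs)"
  by pat_completeness auto
termination
  by (relation "measure length") (auto simp: le_imp_less_Suc length_dropWhile_le)

(* rule (b): an odd run of zeros between positive entries a, b merges them into a + b
   (merges chain left to right); even runs are simply deleted.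
   acc = current merged entry, z = number of zeros following it *)
fun grp :: "real \<Rightarrow> nat \<Rightarrow> (real \<times> nat) list \<Rightarrow> real list" where
  "grp acc z [] = [acc]"
| "grp acc z ((p, z') # bs) = (if odd z then grp (acc + p) z' bs else acc # grp p z' bs)"

(* the passage y^{(i)} \<mapsto> x^{(i+1)}: rule (a) deletes the leading run of zeros,
   rule (b) as above, rule (c): if the final run is odd, the (merged) entry preceding it
   is deleted and added to the first entry *)
definition alg_step :: "real list \<Rightarrow> real list" where
  "alg_step y =
    (case blocks (dropWhile (\<lambda>v. v = 0) y) of
       [] \<Rightarrow> []
     | (p, z) # bs \<Rightarrow>
         (let gs = grp p z bs; zl = snd (last ((p, z) # bs)) in
          if odd zl then
            (case butlast gs of [] \<Rightarrow> [] | g # gs' \<Rightarrow> (g + last gs) # gs')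
          else gs))"

(* Algorithm I, run with fuel f (f = N suffices since each step has nu \<ge> 1);
   returns the pairs (mu^{(i)}, nu^{(i)}), i = 1..u *)
fun algI :: "nat \<Rightarrow> real list \<Rightarrow> (real \<times> nat) list" where
  "algI 0 x = []"
| "algI (Suc f) x =
     (let \<mu> = Min (set x); y = map (\<lambda>v. v - \<mu>) x; \<nu> = nu_of y in
      if length x div 2 - \<nu> = 0 then [(\<mu>, \<nu>)]
      else (\<mu>, \<nu>) # algI f (alg_step y))"

definition lambdas :: "(real \<times> nat) list \<Rightarrow> real list" where
  "lambdas ps = map (\<lambda>i. \<Sum>l<Suc i. fst (ps ! l)) [0..<length ps]"

definition ell_list :: "(real \<times> nat) list \<Rightarrow> real list" where
  "ell_list ps = concat (map (\<lambda>i. replicate (snd (ps ! i)) (lambdas ps ! i)) [0..<length ps])"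

definition admissible :: "nat \<Rightarrow> nat \<Rightarrow> nat list \<Rightarrow> bool" where
  "admissible N k I \<longleftrightarrow> length I = k \<and> set I \<subseteq> {1..2*N}
     \<and> (\<forall>j. Suc j < k \<longrightarrow> I ! j + 1 < I ! Suc j)
     \<and> \<not> (hd I = 1 \<and> last I = 2*N)"

definition H :: "real list \<Rightarrow> nat \<Rightarrow> nat \<Rightarrow> real" where
  "H A N k = Min {(\<Sum>i\<leftarrow>I. A ! (i - 1)) | I. admissible N k I}"

end

theory Submission
  imports Defs
begin

(* An admissible k-tuple in the definition of H is a set of k positions of the
   cyclic array A_1,...,A_2N no two of which are cyclically adjacent.  Encoding such sets by
   boolean masks, H A N k becomes  Hcyc A k,  the minimal weight of a cyclically independent
   k-mask (H_eq_Hcyc, last section).  Hcyc is invariant under rotation, shifts by  k * c  when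
   c is subtracted from every entry, and obeys local reduction rules: two adjacent zeros are
   deleted at the cost of one selected position, and a pattern  a, 0, b  contracts to  a + b
   at the same cost.  Composing these rules along the block decomposition of  y = x - min x
   shows that one round of Algorithm I satisfies  Hcyc y k = Hcyc x' (k - nu)  for k >= nu
   (Hcyc_alg_step) and  Hcyc y k = 0  for k <= nu, while it preserves even length,
   nonnegativity and the highest weight condition, which is what keeps the leading zero run
   even.  So the minima obey the recursion of the prefix sums of ell (Hcyc_round), and the
   theorem follows by induction over the rounds (algI_prefix_sums). *)

section \<open>Cyclically independent masks and their minimal weight\<close>

(* A mask M selects the positions i with M ! i; no_adj forbids two consecutive selected
   positions, cyc_indep additionally forbids selecting both the first and the last one. *)
fun no_adj :: "bool list \<Rightarrow> bool" where
  "no_adj (a # b # l) = (\<not> (a \<and> b) \<and> no_adj (b # l))"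
| "no_adj _ = True"

definition cyc_indep :: "bool list \<Rightarrow> bool" where
  "cyc_indep M \<longleftrightarrow> no_adj M \<and> (M \<noteq> [] \<longrightarrow> \<not> (hd M \<and> last M))"

definition mcount :: "bool list \<Rightarrow> nat" where
  "mcount M = length (filter id M)"

definition mweight :: "bool list \<Rightarrow> real list \<Rightarrow> real" where
  "mweight M y = sum_list (map (\<lambda>(b, v). if b then v else 0) (zip M y))"

definition masks :: "real list \<Rightarrow> nat \<Rightarrow> bool list set" where
  "masks y k = {M. length M = length y \<and> cyc_indep M \<and> mcount M = k}"

definition Hcyc :: "real list \<Rightarrow> nat \<Rightarrow> real" where
  "Hcyc y k = Min ((\<lambda>M. mweight M y) ` masks y k)"

abbreviation nonneg :: "real list \<Rightarrow> bool" where
  "nonneg y \<equiv> \<forall>v\<in>set y. v \<ge> 0"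

abbreviation submask :: "bool list \<Rightarrow> bool list \<Rightarrow> bool" where
  "submask M' M \<equiv> list_all2 (\<lambda>a b. a \<longrightarrow> b) M' M"

lemma mweight_Cons [simp]: "mweight (b # M) (v # y) = (if b then v else 0) + mweight M y"
  by (simp add: mweight_def)

lemma mweight_Nil [simp]: "mweight [] y = 0" "mweight M [] = 0"
  by (auto simp: mweight_def)

lemma mcount_Cons [simp]: "mcount (b # M) = (if b then Suc (mcount M) else mcount M)"
  by (simp add: mcount_def)

lemma mcount_Nil [simp]: "mcount [] = 0"
  by (simp add: mcount_def)

lemma mweight_append:
  "length M1 = length y1 \<Longrightarrow> mweight (M1 @ M2) (y1 @ y2) = mweight M1 y1 + mweight M2 y2"
  by (simp add: mweight_def)

lemma mcount_append: "mcount (M1 @ M2) = mcount M1 + mcount M2"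
  by (simp add: mcount_def)

lemma no_adj_Cons: "no_adj (a # l) = (no_adj l \<and> (l \<noteq> [] \<longrightarrow> \<not> (a \<and> hd l)))"
  by (cases l) auto

lemma no_adj_snoc: "no_adj (l @ [a]) = (no_adj l \<and> (l \<noteq> [] \<longrightarrow> \<not> (last l \<and> a)))"
  by (induction l rule: no_adj.induct) auto

lemma no_adj_replicate_False: "no_adj (replicate n False)"
  by (induction n) (auto simp: no_adj_Cons)

lemma mweight_replicate_False: "mweight (replicate n False) y = 0"
proof (induction n arbitrary: y)
  case (Suc n) then show ?case by (cases y) auto
qed simp

lemma mweight_nonneg: "nonneg y \<Longrightarrow> mweight M y \<ge> 0"
proof (induction M arbitrary: y)
  case (Cons b M) then show ?case by (cases y) auto
qed simp

lemma finite_masks: "finite (masks y k)"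
proof -
  have "masks y k \<subseteq> {xs. set xs \<subseteq> UNIV \<and> length xs = length y}"
    by (auto simp: masks_def)
  moreover have "finite {xs :: bool list. set xs \<subseteq> UNIV \<and> length xs = length y}"
    by (rule finite_lists_length_eq) simp
  ultimately show ?thesis by (rule finite_subset)
qed

lemma masks_nonempty:
  assumes "2 * k \<le> length y"
  shows "masks y k \<noteq> {}"
proof -
  have "\<exists>M. length M = n \<and> no_adj M \<and> mcount M = k \<and> (M = [] \<or> \<not> last M)"
    if "2 * k \<le> n" for n
    using that
  proof (induction k arbitrary: n)
    case 0
    show ?case
      by (intro exI[of _ "replicate n False"])
         (auto simp: no_adj_replicate_False mcount_def last_replicate)
  next
    case (Suc k)
    have "2 * k \<le> n - 2" using Suc.prems by simp
    then obtain M where "length M = n - 2" "no_adj M" "mcount M = k" "M = [] \<or> \<not> last M"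
      using Suc.IH by blast
    then show ?case using Suc.prems
      by (intro exI[of _ "True # False # M"]) (auto simp: no_adj_Cons)
  qed
  then obtain M where "length M = length y" "no_adj M" "mcount M = k" "M = [] \<or> \<not> last M"
    using assms by blast
  hence "M \<in> masks y k" by (auto simp: masks_def cyc_indep_def)
  thus ?thesis by blast
qed

lemma Hcyc_le: "M \<in> masks y k \<Longrightarrow> Hcyc y k \<le> mweight M y"
  using finite_masks unfolding Hcyc_def by auto

lemma Hcyc_attained: "masks y k \<noteq> {} \<Longrightarrow> \<exists>M\<in>masks y k. Hcyc y k = mweight M y"
proof -
  assume "masks y k \<noteq> {}"
  hence "Hcyc y k \<in> (\<lambda>M. mweight M y) ` masks y k"
    unfolding Hcyc_def using finite_masks by (intro Min_in) auto
  thus ?thesis by auto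
qed

lemma Hcyc_eqI:
  assumes AB: "\<And>M. M \<in> masks y k \<Longrightarrow> \<exists>M'\<in>masks y' k'. mweight M' y' \<le> mweight M y"
    and BA: "\<And>M'. M' \<in> masks y' k' \<Longrightarrow> \<exists>M\<in>masks y k. mweight M y \<le> mweight M' y'"
  shows "Hcyc y k = Hcyc y' k'"
proof (cases "masks y k = {}")
  case True
  hence "masks y' k' = {}" using BA by blast
  with True show ?thesis by (simp add: Hcyc_def)
next
  case False
  hence ne': "masks y' k' \<noteq> {}" using AB by blast
  obtain M where M: "M \<in> masks y k" "Hcyc y k = mweight M y"
    using Hcyc_attained[OF False] by blast
  obtain N where N: "N \<in> masks y' k'" "Hcyc y' k' = mweight N y'"
    using Hcyc_attained[OF ne'] by blast
  have "Hcyc y' k' \<le> Hcyc y k" using AB[OF M(1)] M(2) Hcyc_le by force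
  moreover have "Hcyc y k \<le> Hcyc y' k'" using BA[OF N(1)] N(2) Hcyc_le by force
  ultimately show ?thesis by linarith
qed

lemma Hcyc_nonneg: "nonneg y \<Longrightarrow> 2 * k \<le> length y \<Longrightarrow> Hcyc y k \<ge> 0"
  using Hcyc_attained masks_nonempty mweight_nonneg by metis

lemma Hcyc_zero: "nonneg y \<Longrightarrow> Hcyc y 0 = 0"
proof -
  assume nn: "nonneg y"
  have "replicate (length y) False \<in> masks y 0"
    using no_adj_replicate_False by (auto simp: masks_def cyc_indep_def mcount_def)
  hence "Hcyc y 0 \<le> 0" using Hcyc_le mweight_replicate_False by metis
  moreover have "Hcyc y 0 \<ge> 0" using Hcyc_nonneg[OF nn] by simp
  ultimately show ?thesis by simp
qed


section \<open>Monotonicity, rotation and shift\<close>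

lemma submask_no_adj: "submask M' M \<Longrightarrow> no_adj M \<Longrightarrow> no_adj M'"
proof (induction M arbitrary: M' rule: no_adj.induct)
  case (1 a b l)
  then obtain a' b' l' where "M' = a' # b' # l'" by (auto simp: list_all2_Cons2)
  with 1 show ?case by auto
qed (auto simp: list_all2_Cons2)

lemma submask_hd_last:
  "submask M' M \<Longrightarrow> M' \<noteq> [] \<Longrightarrow> (hd M' \<longrightarrow> hd M) \<and> (last M' \<longrightarrow> last M)"
proof (induction M' M rule: list_all2_induct)
  case (Cons x xs y ys)
  then show ?case by (cases xs) (auto dest: list_all2_lengthD)
qed simp

lemma submask_cyc_indep: "submask M' M \<Longrightarrow> cyc_indep M \<Longrightarrow> cyc_indep M'"
  unfolding cyc_indep_def using submask_no_adj submask_hd_last by (metis list_all2_Nil2)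

lemma submask_mweight: "submask M' M \<Longrightarrow> nonneg y \<Longrightarrow> mweight M' y \<le> mweight M y"
proof (induction M' M arbitrary: y rule: list_all2_induct)
  case (Cons x xs b ys)
  then show ?case by (cases y) (auto simp: add_mono)
qed simp

lemma masks_drop_one:
  assumes "M \<in> masks y k" "k \<ge> 1" "nonneg y"
  shows "\<exists>M'\<in>masks y (k - 1). mweight M' y \<le> mweight M y"
proof -
  have "\<exists>M'. submask M' M \<and> mcount M' = mcount M - 1" if "mcount M \<ge> 1" for M
    using that
  proof (induction M)
    case (Cons b M)
    show ?case
    proof (cases b)
      case True
      then show ?thesis by (intro exI[of _ "False # M"]) (simp add: list_all2_refl)
    next
      case False
      then obtain M' where "submask M' M \<and> mcount M' = mcount M - 1" using Cons by auto
      then show ?thesis using False by (intro exI[of _ "False # M'"]) auto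
    qed
  qed simp
  then obtain M' where M': "submask M' M" "mcount M' = mcount M - 1"
    using assms by (auto simp: masks_def)
  have "M' \<in> masks y (k - 1)"
    using M' assms submask_cyc_indep by (auto simp: masks_def dest: list_all2_lengthD)
  moreover have "mweight M' y \<le> mweight M y" using submask_mweight M' assms by blast
  ultimately show ?thesis by blast
qed

lemma Hcyc_mono: "nonneg y \<Longrightarrow> k \<le> k' \<Longrightarrow> 2 * k' \<le> length y \<Longrightarrow> Hcyc y k \<le> Hcyc y k'"
proof (induction k')
  case (Suc n)
  obtain M where M: "M \<in> masks y (Suc n)" "Hcyc y (Suc n) = mweight M y"
    using Hcyc_attained masks_nonempty Suc.prems by metis
  have "Hcyc y n \<le> Hcyc y (Suc n)"
    using masks_drop_one[OF M(1) _ Suc.prems(1)] M(2) Hcyc_le by fastforce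
  then show ?case using Suc by (cases "k = Suc n") auto
qed simp

lemma cyc_indep_rotate: "cyc_indep (m # M) \<longleftrightarrow> cyc_indep (M @ [m])"
  by (cases "M = []") (auto simp: cyc_indep_def no_adj_Cons no_adj_snoc)

lemma Hcyc_rotate: "Hcyc (v # l) k = Hcyc (l @ [v]) k"
proof (rule Hcyc_eqI)
  fix M assume M: "M \<in> masks (v # l) k"
  then obtain m M' where MM: "M = m # M'" and len: "length M' = length l"
    by (cases M) (auto simp: masks_def)
  have "M' @ [m] \<in> masks (l @ [v]) k"
    using M MM len cyc_indep_rotate by (auto simp: masks_def mcount_append)
  moreover have "mweight (M' @ [m]) (l @ [v]) = mweight M (v # l)"
    using MM len by (simp add: mweight_append)
  ultimately show "\<exists>M'\<in>masks (l @ [v]) k. mweight M' (l @ [v]) \<le> mweight M (v # l)" by force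
next
  fix M assume M: "M \<in> masks (l @ [v]) k"
  hence "M \<noteq> []" by (auto simp: masks_def)
  then obtain M' m where MM: "M = M' @ [m]" by (metis append_butlast_last_id)
  have len: "length M' = length l" using M MM by (auto simp: masks_def)
  have "m # M' \<in> masks (v # l) k"
    using M MM len cyc_indep_rotate by (auto simp: masks_def mcount_append)
  moreover have "mweight (m # M') (v # l) = mweight M (l @ [v])"
    using MM len by (simp add: mweight_append)
  ultimately show "\<exists>M'\<in>masks (v # l) k. mweight M' (v # l) \<le> mweight M (l @ [v])" by force
qed

lemma Hcyc_rotate_append: "Hcyc (u @ w) k = Hcyc (w @ u) k"
proof (induction u arbitrary: w)
  case (Cons a u)
  have "Hcyc ((a # u) @ w) k = Hcyc (u @ w @ [a]) k" using Hcyc_rotate[of a "u @ w"] by simp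
  also have "\<dots> = Hcyc ((w @ [a]) @ u) k" using Cons[of "w @ [a]"] by simp
  finally show ?case by simp
qed simp

lemma mweight_shift:
  "length M = length x \<Longrightarrow> mweight M (map (\<lambda>v. v - c) x) = mweight M x - real (mcount M) * c"
  by (induction M x rule: list_induct2) (auto simp: algebra_simps)

(* every k-mask picks exactly k entries, so subtracting c from all entries shifts by k * c *)
lemma Hcyc_shift:
  assumes "2 * k \<le> length x"
  shows "Hcyc (map (\<lambda>v. v - c) x) k = Hcyc x k - real k * c"
proof -
  have same: "masks (map (\<lambda>v. v - c) x) k = masks x k" by (simp add: masks_def)
  have "(\<lambda>M. mweight M (map (\<lambda>v. v - c) x)) ` masks x k
      = (\<lambda>v. v - real k * c) ` ((\<lambda>M. mweight M x) ` masks x k)"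
    by (auto simp: mweight_shift masks_def image_image)
  moreover have "Min ((\<lambda>v. v - real k * c) ` ((\<lambda>M. mweight M x) ` masks x k))
      = Min ((\<lambda>M. mweight M x) ` masks x k) - real k * c"
    by (rule mono_Min_commute[symmetric])
       (use finite_masks masks_nonempty[OF assms] in \<open>auto simp: mono_def\<close>)
  ultimately show ?thesis unfolding Hcyc_def same by simp
qed

section \<open>Local reduction rules\<close>

(* Two adjacent zeros: an optimal mask may use exactly one of them, so they can be deleted
   together with one selected position. *)
lemma two_zeros_dominated:
  assumes M: "M \<in> masks (0 # 0 # ys) k" and k: "k \<ge> 1" and nn: "nonneg ys"
  shows "\<exists>M'\<in>masks ys (k - 1). mweight M' ys \<le> mweight M (0 # 0 # ys)"
proof -
  obtain b0 b1 T where MM: "M = b0 # b1 # T" and len: "length T = length ys"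
    using M by (cases M rule: remdups_adj.cases) (auto simp: masks_def)
  have cyc: "cyc_indep (b0 # b1 # T)" and cn: "mcount (b0 # b1 # T) = k"
    using M MM by (auto simp: masks_def)
  have naT: "no_adj T" and nb: "\<not> (b0 \<and> b1)" and nb1: "T \<noteq> [] \<longrightarrow> \<not> (b1 \<and> hd T)"
    and nbl: "T \<noteq> [] \<longrightarrow> \<not> (b0 \<and> last T)"
    using cyc by (auto simp: cyc_indep_def no_adj_Cons)
  have wM: "mweight M (0 # 0 # ys) = mweight T ys" using MM by simp
  consider "b0 \<or> b1" | "\<not> b0" "\<not> b1" "T \<noteq> []" "hd T" | "\<not> b0" "\<not> b1" "T = [] \<or> \<not> hd T"
    by blast
  then show ?thesis
  proof cases
    case 1
    hence "T \<in> masks ys (k - 1)"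
      using naT nb nb1 nbl cn len by (auto simp: cyc_indep_def masks_def)
    thus ?thesis using wM by auto
  next
    case 2
    then obtain T' where TT: "T = True # T'" by (cases T) auto
    have "False # T' \<in> masks ys (k - 1)" using 2 TT cn len naT
      by (auto simp: masks_def cyc_indep_def no_adj_Cons)
    moreover have "mweight (False # T') ys \<le> mweight T ys" using TT len nn by (cases ys) auto
    ultimately show ?thesis using wM by force
  next
    case 3
    hence "T \<in> masks ys k" using naT cn len by (auto simp: masks_def cyc_indep_def)
    then show ?thesis using masks_drop_one[OF _ k nn] wM by auto
  qed
qed

lemma Hcyc_two_zeros:
  assumes k: "k \<ge> 1" and nn: "nonneg ys"
  shows "Hcyc (0 # 0 # ys) k = Hcyc ys (k - 1)"
proof (rule Hcyc_eqI)
  fix T assume T: "T \<in> masks ys (k - 1)"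
  hence cyc: "cyc_indep T" by (auto simp: masks_def)
  show "\<exists>M\<in>masks (0 # 0 # ys) k. mweight M (0 # 0 # ys) \<le> mweight T ys"
  proof (cases "T = [] \<or> \<not> last T")
    case True
    have "True # False # T \<in> masks (0 # 0 # ys) k" using True cyc T k
      by (auto simp: masks_def cyc_indep_def no_adj_Cons)
    thus ?thesis by force
  next
    case False
    hence "\<not> hd T" using cyc by (auto simp: cyc_indep_def)
    hence "False # True # T \<in> masks (0 # 0 # ys) k" using False cyc T k
      by (auto simp: masks_def cyc_indep_def no_adj_Cons)
    thus ?thesis by force
  qed
qed (use two_zeros_dominated[OF _ k nn] in blast)

(* The pattern a, 0, b with a, b \<ge> 0: an optimal mask selects either the 0 or both a and b,
   which corresponds to leaving a + b unselected resp. selected. *)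
lemma contract_dominated:
  assumes M: "M \<in> masks (a # 0 # b # ys) k" and k: "k \<ge> 1"
    and nn: "nonneg ys" and a: "a \<ge> 0" and b: "b \<ge> 0" and ne: "ys \<noteq> []"
  shows "\<exists>M'\<in>masks ((a + b) # ys) (k - 1). mweight M' ((a + b) # ys) \<le> mweight M (a # 0 # b # ys)"
proof -
  obtain c0 c1 c2 T where MM: "M = c0 # c1 # c2 # T" and len: "length T = length ys"
    using M by (cases M rule: remdups_adj.cases; cases "tl (tl M)") (auto simp: masks_def)
  have Tne: "T \<noteq> []" using len ne by auto
  have cyc: "cyc_indep (c0 # c1 # c2 # T)" and cn: "mcount (c0 # c1 # c2 # T) = k"
    using M MM by (auto simp: masks_def)
  have naT: "no_adj T" and n01: "\<not> (c0 \<and> c1)" and n12: "\<not> (c1 \<and> c2)"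
    and n2T: "\<not> (c2 \<and> hd T)" and nl: "\<not> (c0 \<and> last T)"
    using cyc Tne by (auto simp: cyc_indep_def no_adj_Cons)
  have wM: "mweight M (a # 0 # b # ys) = (if c0 then a else 0) + (if c2 then b else 0) + mweight T ys"
    using MM by simp
  have F: "False # T \<in> masks ((a + b) # ys) (mcount T)"
    using naT len by (auto simp: masks_def cyc_indep_def no_adj_Cons)
  consider "c1" | "c0" "c2" | "\<not> c1" "c0 \<noteq> c2" | "\<not> c0" "\<not> c1" "\<not> c2" by blast
  then show ?thesis
  proof cases
    case 1
    hence "mcount T = k - 1" "mweight (False # T) ((a + b) # ys) = mweight M (a # 0 # b # ys)"
      using cn n01 n12 wM by auto
    then show ?thesis using F by force
  next
    case 2
    hence "True # T \<in> masks ((a + b) # ys) (k - 1)" using cn n01 naT len n2T nl Tne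
      by (auto simp: masks_def cyc_indep_def no_adj_Cons)
    then show ?thesis using wM 2 by force
  next
    case 3
    hence "mcount T = k - 1" "mweight (False # T) ((a + b) # ys) \<le> mweight M (a # 0 # b # ys)"
      using cn wM a b by (cases c0; auto)+
    then show ?thesis using F by force
  next
    case 4
    have nn': "nonneg ((a + b) # ys)" using nn a b by auto
    from 4 F cn have "False # T \<in> masks ((a + b) # ys) k" by simp
    then show ?thesis using masks_drop_one[OF _ k nn'] wM 4 by fastforce
  qed
qed

lemma Hcyc_contract:
  assumes k: "k \<ge> 1" and nn: "nonneg ys" and a: "a \<ge> 0" and b: "b \<ge> 0" and ne: "ys \<noteq> []"
  shows "Hcyc (a # 0 # b # ys) k = Hcyc ((a + b) # ys) (k - 1)"
proof (rule Hcyc_eqI)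
  fix M assume M: "M \<in> masks ((a + b) # ys) (k - 1)"
  then obtain d T where MM: "M = d # T" and len: "length T = length ys"
    by (cases M) (auto simp: masks_def)
  have Tne: "T \<noteq> []" using len ne by auto
  have cyc: "cyc_indep (d # T)" and cn: "mcount (d # T) = k - 1" using M MM by (auto simp: masks_def)
  have "[d, \<not> d, d] @ T \<in> masks (a # 0 # b # ys) k" using cyc cn len Tne k
    by (cases d) (auto simp: masks_def cyc_indep_def no_adj_Cons)
  moreover have "mweight ([d, \<not> d, d] @ T) (a # 0 # b # ys) = mweight M ((a + b) # ys)"
    using MM by simp
  ultimately show "\<exists>M'\<in>masks (a # 0 # b # ys) k. mweight M' (a # 0 # b # ys) \<le> mweight M ((a + b) # ys)"
    by force
qed (use contract_dominated[OF _ k nn a b ne] in blast)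

(* the degenerate contraction of a two-element array g, 0 *)
lemma Hcyc_pair_zero:
  assumes k: "k \<ge> 1" and g: "g \<ge> 0"
  shows "Hcyc [g, 0] k = Hcyc [] (k - 1)"
proof (rule Hcyc_eqI)
  fix M assume M: "M \<in> masks [g, 0] k"
  then obtain c0 c1 where MM: "M = [c0, c1]"
    by (cases M rule: remdups_adj.cases) (auto simp: masks_def)
  have "\<not> (c0 \<and> c1)" "mcount [c0, c1] = k" using M MM by (auto simp: masks_def cyc_indep_def)
  hence "k = 1" using k by (cases c0; cases c1) auto
  hence "[] \<in> masks [] (k - 1)" by (simp add: masks_def cyc_indep_def)
  moreover have "0 \<le> mweight M [g, 0]" using MM g by simp
  ultimately show "\<exists>M'\<in>masks [] (k - 1). mweight M' [] \<le> mweight M [g, 0]" by force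
next
  fix M assume M: "M \<in> masks [] (k - 1)"
  hence "k = 1" "M = []" using k by (auto simp: masks_def)
  hence "[False, True] \<in> masks [g, 0] k" by (simp add: masks_def cyc_indep_def)
  thus "\<exists>M'\<in>masks [g, 0] k. mweight M' [g, 0] \<le> mweight M []" using \<open>M = []\<close> by force
qed

lemma Hcyc_zeros:
  "nonneg l \<Longrightarrow> a \<le> k \<Longrightarrow> Hcyc (replicate (2 * a) 0 @ l) k = Hcyc l (k - a)"
proof (induction a arbitrary: k)
  case (Suc a)
  have nn: "nonneg (replicate (2 * a) 0 @ l)" using Suc.prems by auto
  have "Hcyc (replicate (2 * Suc a) 0 @ l) k = Hcyc (0 # 0 # (replicate (2 * a) 0 @ l)) k"
    by simp
  also have "\<dots> = Hcyc (replicate (2 * a) 0 @ l) (k - 1)"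
    using Hcyc_two_zeros[OF _ nn] Suc.prems by simp
  also have "\<dots> = Hcyc l (k - 1 - a)" using Suc by simp
  finally show ?case by simp
qed simp

lemma Hcyc_zeros_after:
  assumes "nonneg l" "acc \<ge> 0" "a \<le> k"
  shows "Hcyc (acc # replicate (2 * a) 0 @ l) k = Hcyc (acc # l) (k - a)"
proof -
  have "Hcyc (acc # replicate (2 * a) 0 @ l) k = Hcyc (replicate (2 * a) 0 @ (l @ [acc])) k"
    using Hcyc_rotate[of acc "replicate (2 * a) 0 @ l"] by simp
  also have "\<dots> = Hcyc (l @ [acc]) (k - a)" using assms by (intro Hcyc_zeros) auto
  also have "\<dots> = Hcyc (acc # l) (k - a)" using Hcyc_rotate by simp
  finally show ?thesis .
qed

section \<open>Blocks and the merging of entries\<close>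

fun unblock :: "(real \<times> nat) list \<Rightarrow> real list" where
  "unblock [] = []"
| "unblock ((p, z) # bs) = p # replicate z 0 @ unblock bs"

(* the number of selected positions consumed by the zero runs of  acc, 0^z, unblock bs,
   except for the wrap-around contribution of an odd final run *)
fun inner_nu :: "nat \<Rightarrow> (real \<times> nat) list \<Rightarrow> nat" where
  "inner_nu z [] = z div 2"
| "inner_nu z ((p, z') # bs) = (z + 1) div 2 + inner_nu z' bs"

fun last_run :: "nat \<Rightarrow> (real \<times> nat) list \<Rightarrow> nat" where
  "last_run z [] = z"
| "last_run z ((p, z') # bs) = last_run z' bs"

lemma takeWhile_zero:
  "takeWhile (\<lambda>v. v = (0::real)) l = replicate (length (takeWhile (\<lambda>v. v = 0) l)) 0"
  by (metis (mono_tags, lifting) replicate_length_same set_takeWhileD)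

lemma unblock_blocks: "unblock (blocks l) = l"
proof (induction l rule: blocks.induct)
  case (2 v vs)
  then show ?case using takeWhile_zero[of vs] takeWhile_dropWhile_id[of "\<lambda>w. w = 0" vs]
    by (metis blocks.simps(2) unblock.simps(2) append_Cons)
qed simp

lemma blocks_nonzero: "l = [] \<or> hd l \<noteq> 0 \<Longrightarrow> (p, z) \<in> set (blocks l) \<Longrightarrow> p \<noteq> 0"
proof (induction l arbitrary: p z rule: blocks.induct)
  case 1 then show ?case by simp
next
  case (2 v vs)
  have h: "dropWhile (\<lambda>w. w = 0) vs = [] \<or> hd (dropWhile (\<lambda>w. w = 0) vs) \<noteq> 0"
    using hd_dropWhile[of "\<lambda>w. w = (0::real)" vs] by blast
  have mem: "(p, z) \<in> set ((v, length (takeWhile (\<lambda>w. w = 0) vs)) # blocks (dropWhile (\<lambda>w. w = 0) vs))"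
    using 2(3) by (simp only: blocks.simps)
  show ?case
  proof (cases "(p, z) \<in> set (blocks (dropWhile (\<lambda>w. w = 0) vs))")
    case True show ?thesis using 2(1)[OF h True] by simp
  next
    case False
    hence "p = v" using mem by simp
    then show ?thesis using 2(2) by simp
  qed
qed

lemma last_run_last: "snd (last ((p, z) # bs)) = last_run z bs"
  by (induction bs arbitrary: p z) auto

lemma grp_nonneg: "acc \<ge> 0 \<Longrightarrow> nonneg (unblock bs) \<Longrightarrow> nonneg (grp acc z bs)"
  by (induction acc z bs rule: grp.induct) auto

lemma grp_length:
  "length (grp acc z bs) + 2 * inner_nu z bs + last_run z bs mod 2
     = length (acc # replicate z 0 @ unblock bs)"
proof (induction acc z bs rule: grp.induct)
  case (1 acc z) then show ?case by simp
next
  case (2 acc z p z' bs)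
  show ?case
  proof (cases "odd z")
    case True
    with 2 have "length (grp (acc + p) z' bs) + 2 * inner_nu z' bs + last_run z' bs mod 2 = length ((acc + p) # replicate z' 0 @ unblock bs)" by simp
    moreover have "2 * ((z + 1) div 2) = z + 1" using True by presburger
    ultimately show ?thesis using True
      by (simp only: grp.simps inner_nu.simps last_run.simps if_P[OF True] length_Cons length_append length_replicate unblock.simps not_False_eq_True if_True if_False add_mult_distrib2)
  next
    case False
    with 2 have "length (grp p z' bs) + 2 * inner_nu z' bs + last_run z' bs mod 2 = length (p # replicate z' 0 @ unblock bs)" by simp
    moreover have "2 * ((z + 1) div 2) = z" using False by presburger
    ultimately show ?thesis using False
      by (simp only: grp.simps inner_nu.simps last_run.simps if_not_P[OF False] length_Cons length_append length_replicate unblock.simps not_False_eq_True if_True if_False add_mult_distrib2)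
  qed
qed

(* one step of grp on an odd run: the run is reduced to a single zero, which contracts *)
lemma Hcyc_merge_block:
  assumes "odd z" "acc \<ge> 0" "p \<ge> 0" "nonneg R" "R \<noteq> []" "(z + 1) div 2 \<le> k"
  shows "Hcyc (acc # replicate z 0 @ p # R) k = Hcyc ((acc + p) # R) (k - (z + 1) div 2)"
proof -
  obtain b where z: "z = 2 * b + 1" using assms(1) oddE by blast
  have "Hcyc (acc # replicate z 0 @ p # R) k = Hcyc (acc # replicate (2 * b) 0 @ 0 # p # R) k"
    unfolding z replicate_add by simp
  also have "\<dots> = Hcyc (acc # 0 # p # R) (k - b)"
    using assms z by (intro Hcyc_zeros_after) auto
  also have "\<dots> = Hcyc ((acc + p) # R) (k - b - 1)"
    using assms z by (intro Hcyc_contract) auto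
  finally show ?thesis using z by simp
qed

(* one step of grp on an even run: the run disappears and acc is rotated to the end *)
lemma Hcyc_keep_block:
  assumes "even z" "acc \<ge> 0" "p \<ge> 0" "nonneg R" "z div 2 \<le> k"
  shows "Hcyc (acc # replicate z 0 @ p # R) k = Hcyc (p # R @ [acc]) (k - z div 2)"
proof -
  have "Hcyc (acc # replicate z 0 @ p # R) k = Hcyc (acc # p # R) (k - z div 2)"
    using assms Hcyc_zeros_after[of "p # R" acc "z div 2" k] by (simp add: even_two_times_div_two)
  also have "\<dots> = Hcyc (p # R @ [acc]) (k - z div 2)"
    using Hcyc_rotate[of acc "p # R"] by simp
  finally show ?thesis .
qed

lemma Hcyc_grp:
  assumes "acc \<ge> 0" "nonneg (unblock bs)" "nonneg P"
    and "even (length (acc # replicate z 0 @ unblock bs @ P))" "inner_nu z bs \<le> k"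
  shows "Hcyc (acc # replicate z 0 @ unblock bs @ P) k
       = Hcyc (grp acc z bs @ replicate (last_run z bs mod 2) 0 @ P) (k - inner_nu z bs)"
  using assms
proof (induction acc z bs arbitrary: P k rule: grp.induct)
  case (1 acc z)
  have "replicate z (0::real) @ P = replicate (2 * (z div 2)) 0 @ (replicate (z mod 2) 0 @ P)"
    by (metis div_mult_mod_eq mult.commute replicate_add append_assoc)
  moreover have "Hcyc (acc # replicate (2 * (z div 2)) 0 @ (replicate (z mod 2) 0 @ P)) k
      = Hcyc (acc # replicate (z mod 2) 0 @ P) (k - z div 2)"
    by (rule Hcyc_zeros_after) (use 1 in auto)
  ultimately show ?case by simp
next
  case (2 acc z p z' bs)
  let ?R = "replicate z' 0 @ unblock bs @ P"
  have nn: "nonneg ?R" "p \<ge> 0" "nonneg (unblock bs)" using 2 by auto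
  show ?case
  proof (cases "odd z")
    case True
    have "odd (length ?R)" using 2(6) True by simp
    hence "?R \<noteq> []" by auto
    then show ?thesis
      using Hcyc_merge_block[OF True 2(3) nn(2,1)] 2(1)[OF True, of P] True 2 nn
      by (simp add: diff_diff_add)
  next
    case False
    have "Hcyc (acc # replicate z 0 @ unblock ((p, z') # bs) @ P) k
        = Hcyc (p # replicate z' 0 @ unblock bs @ (P @ [acc])) (k - z div 2)"
      using Hcyc_keep_block[of z acc p ?R k] False 2(3,7) nn by simp
    also have "\<dots> = Hcyc (grp p z' bs @ replicate (last_run z' bs mod 2) 0 @ P @ [acc])
                        (k - z div 2 - inner_nu z' bs)"
      using 2(2)[OF False, of "P @ [acc]"] 2 nn False by simp
    also have "\<dots> = Hcyc (acc # grp p z' bs @ replicate (last_run z' bs mod 2) 0 @ P)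
                        (k - z div 2 - inner_nu z' bs)"
      using Hcyc_rotate[of acc "grp p z' bs @ replicate (last_run z' bs mod 2) 0 @ P"] by simp
    finally show ?thesis using False by (simp add: diff_diff_add)
  qed
qed

section \<open>One round of Algorithm I\<close>

(* run_nu c l is nu_of for the array 0^c @ l, i.e. with c zeros still pending *)
definition run_nu :: "nat \<Rightarrow> real list \<Rightarrow> nat" where
  "run_nu c l = sum_list (map (\<lambda>n. (n + 1) div 2) (zruns_aux c l))"

lemma nu_of_run_nu: "nu_of y = run_nu 0 y"
  by (simp add: nu_of_def zero_runs_def run_nu_def)

lemma run_nu_Nil: "run_nu c [] = (c + 1) div 2"
  by (simp add: run_nu_def)

lemma run_nu_nonzero: "v \<noteq> 0 \<Longrightarrow> run_nu c (v # l) = (c + 1) div 2 + run_nu 0 l"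
  by (simp add: run_nu_def)

lemma run_nu_zeros: "run_nu c (replicate n 0 @ l) = run_nu (c + n) l"
proof -
  have "zruns_aux c (replicate n 0 @ l) = zruns_aux (c + n) l"
    by (induction n arbitrary: c) auto
  thus ?thesis by (simp add: run_nu_def)
qed

(* there is at least one zero run, so every round removes at least one row *)
lemma run_nu_pos: "c > 0 \<or> 0 \<in> set l \<Longrightarrow> run_nu c l \<ge> 1"
proof (induction l arbitrary: c)
  case (Cons v l)
  show ?case
  proof (cases "v = 0")
    case True
    hence "run_nu c (v # l) = run_nu (Suc c) l" by (simp add: run_nu_def)
    then show ?thesis using Cons.IH by simp
  next
    case False
    hence "c > 0 \<or> 0 \<in> set l" using Cons.prems by simp
    then show ?thesis using Cons.IH[of 0] run_nu_nonzero[OF False] by auto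
  qed
qed (simp add: run_nu_Nil)

lemma run_nu_unblock:
  "\<forall>q\<in>set ((p, z) # bs). fst q \<noteq> 0 \<Longrightarrow>
   run_nu c (unblock ((p, z) # bs)) = (c + 1) div 2 + inner_nu z bs + last_run z bs mod 2"
proof (induction bs arbitrary: c p z)
  case Nil
  have "(z + 1) div 2 = z div 2 + z mod 2" by presburger
  moreover have "run_nu c (unblock [(p, z)]) = (c + 1) div 2 + run_nu 0 (replicate z 0 @ [])"
    using Nil by (simp add: run_nu_nonzero)
  ultimately show ?case by (simp only: run_nu_zeros run_nu_Nil) simp
next
  case (Cons q bs)
  obtain p' z' where q: "q = (p', z')" by (cases q)
  have "run_nu c (unblock ((p, z) # q # bs))
      = (c + 1) div 2 + run_nu 0 (replicate z 0 @ unblock ((p', z') # bs))"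
    using Cons.prems q by (simp add: run_nu_nonzero)
  also have "\<dots> = (c + 1) div 2 + run_nu z (unblock ((p', z') # bs))"
    by (simp only: run_nu_zeros) simp
  finally show ?case using Cons.IH[of p' z' z] Cons.prems q by simp
qed

definition wrap_last :: "real list \<Rightarrow> real list" where
  "wrap_last gs = (case butlast gs of [] \<Rightarrow> [] | g # gs' \<Rightarrow> (g + last gs) # gs')"

lemma length_wrap_last: "length (wrap_last gs) = length gs - 1"
proof -
  have "length (butlast gs) = length gs - 1" by simp
  thus ?thesis by (cases "butlast gs") (auto simp: wrap_last_def)
qed

lemma wrap_last_nonneg: "nonneg gs \<Longrightarrow> nonneg (wrap_last gs)"
  by (cases gs rule: rev_cases) (auto simp: wrap_last_def split: list.split)

(* an odd final zero run: after the even part is removed one zero remains, which joins the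
   last entry to the first one cyclically *)
lemma Hcyc_wrap_last:
  assumes "odd (length gs)" "nonneg gs" "k \<ge> 1"
  shows "Hcyc (gs @ [0]) k = Hcyc (wrap_last gs) (k - 1)"
proof (cases "butlast gs")
  case Nil
  then obtain g where "gs = [g]" using assms(1) by (cases gs rule: rev_cases) auto
  then show ?thesis using Hcyc_pair_zero assms by (simp add: wrap_last_def)
next
  case (Cons g gs')
  then obtain l where gs: "gs = (g # gs') @ [l]"
    by (metis append_butlast_last_id list.distinct(1) butlast.simps(1))
  hence "gs' \<noteq> []" using assms(1) by auto
  have "Hcyc (gs @ [0]) k = Hcyc (l # 0 # g # gs') k"
    using Hcyc_rotate_append[of "g # gs'" "[l, 0]"] gs by simp
  also have "\<dots> = Hcyc ((l + g) # gs') (k - 1)"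
    using assms gs \<open>gs' \<noteq> []\<close> by (intro Hcyc_contract) auto
  finally show ?thesis using gs by (simp add: wrap_last_def add.commute)
qed

definition reduce_blocks :: "real \<Rightarrow> nat \<Rightarrow> (real \<times> nat) list \<Rightarrow> real list" where
  "reduce_blocks p z bs = (if odd (last_run z bs) then wrap_last (grp p z bs) else grp p z bs)"

lemma alg_step_blocks:
  "blocks (dropWhile (\<lambda>v. v = 0) y) = (p, z) # bs \<Longrightarrow> alg_step y = reduce_blocks p z bs"
  using last_run_last[of p z bs] by (simp add: alg_step_def reduce_blocks_def wrap_last_def Let_def)

lemma Hcyc_reduce_blocks:
  assumes nn: "nonneg (unblock ((p, z) # bs))" and ev: "even (length (unblock ((p, z) # bs)))"
  defines "c \<equiv> inner_nu z bs + last_run z bs mod 2"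
  shows "length (reduce_blocks p z bs) + 2 * c = length (unblock ((p, z) # bs))"
    and "nonneg (reduce_blocks p z bs)"
    and "c \<le> k \<Longrightarrow> Hcyc (unblock ((p, z) # bs)) k = Hcyc (reduce_blocks p z bs) (k - c)"
proof -
  define gs where "gs = grp p z bs"
  define r where "r = last_run z bs mod 2"
  have pos: "p \<ge> 0" "nonneg (unblock bs)" using nn by auto
  have gnn: "nonneg gs" using grp_nonneg[OF pos] gs_def by simp
  have glen: "length gs + 2 * inner_nu z bs + r = length (unblock ((p, z) # bs))"
    using grp_length[of p z bs] unfolding gs_def r_def by simp
  have Hg: "Hcyc (unblock ((p, z) # bs)) k = Hcyc (gs @ replicate r 0) (k - inner_nu z bs)"
    if "inner_nu z bs \<le> k" for k
    using Hcyc_grp[of p bs "[]" z k] pos ev that by (simp add: gs_def r_def)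
  have red: "reduce_blocks p z bs = (if r = 1 then wrap_last gs else gs)"
    by (simp add: reduce_blocks_def gs_def r_def odd_iff_mod_2_eq_one)
  have "length (reduce_blocks p z bs) + 2 * c = length (unblock ((p, z) # bs))
      \<and> nonneg (reduce_blocks p z bs)
      \<and> (c \<le> k \<longrightarrow> Hcyc (unblock ((p, z) # bs)) k = Hcyc (reduce_blocks p z bs) (k - c))"
  proof (cases "r = 1")
    case True
    have "odd (length gs)" using glen True ev by presburger
    moreover from this have "length (wrap_last gs) + 1 = length gs"
      using odd_pos length_wrap_last by fastforce
    ultimately show ?thesis using True red Hg glen gnn Hcyc_wrap_last[of gs "k - inner_nu z bs"]
      by (auto simp: wrap_last_nonneg c_def r_def[symmetric] diff_diff_add)
  next
    case False
    hence "r = 0" using r_def by auto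
    then show ?thesis using red Hg glen gnn by (simp add: c_def r_def[symmetric])
  qed
  then show "length (reduce_blocks p z bs) + 2 * c = length (unblock ((p, z) # bs))"
    "nonneg (reduce_blocks p z bs)"
    "c \<le> k \<Longrightarrow> Hcyc (unblock ((p, z) # bs)) k = Hcyc (reduce_blocks p z bs) (k - c)"
    by blast+
qed

lemma split_leading_zeros:
  fixes y :: "real list"
  shows "even (length (takeWhile (\<lambda>v. v = 0) y)) \<Longrightarrow>
    \<exists>a. y = replicate (2 * a) 0 @ dropWhile (\<lambda>v. v = 0) y"
  using takeWhile_dropWhile_id[of "\<lambda>v. v = 0" y] takeWhile_zero[of y] by (metis evenE)

lemma blocks_dropWhile:
  assumes "y1 = dropWhile (\<lambda>v. v = 0) y" "y1 \<noteq> []"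
  obtains p z bs where "blocks y1 = (p, z) # bs" "unblock ((p, z) # bs) = y1"
    "\<forall>q\<in>set ((p, z) # bs). fst q \<noteq> 0"
proof -
  obtain v vs where y1: "y1 = v # vs" using assms(2) by (cases y1) auto
  obtain p z bs where bl: "blocks y1 = (p, z) # bs" using y1 by simp
  have "hd y1 \<noteq> 0" using assms hd_dropWhile[of "\<lambda>v. v = (0::real)" y] by auto
  hence "\<forall>q\<in>set ((p, z) # bs). fst q \<noteq> 0" using blocks_nonzero[of y1] bl by force
  then show ?thesis using that bl unblock_blocks[of y1] by simp
qed

lemma Hcyc_alg_step:
  assumes nn: "nonneg y" and ev: "even (length y)"
    and lead: "even (length (takeWhile (\<lambda>v. v = 0) y))"
  shows "length (alg_step y) + 2 * nu_of y = length y"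
    and "nonneg (alg_step y)"
    and "nu_of y \<le> k \<Longrightarrow> Hcyc y k = Hcyc (alg_step y) (k - nu_of y)"
proof -
  define y1 where "y1 = dropWhile (\<lambda>v. v = 0) y"
  obtain a where yeq: "y = replicate (2 * a) 0 @ y1"
    using split_leading_zeros[OF lead] y1_def by blast
  have nn1: "nonneg y1" and ev1: "even (length y1)" using nn ev yeq by auto
  have Hy: "Hcyc y k = Hcyc y1 (k - a)" if "a \<le> k" for k
    using yeq nn1 that Hcyc_zeros by simp
  have "length (alg_step y) + 2 * nu_of y = length y \<and> nonneg (alg_step y)
      \<and> (\<forall>k. nu_of y \<le> k \<longrightarrow> Hcyc y k = Hcyc (alg_step y) (k - nu_of y))"
  proof (cases "y1 = []")
    case True
    have "alg_step y = []" using True by (simp add: alg_step_def y1_def[symmetric])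
    moreover have "nu_of y = a"
      using yeq True run_nu_zeros[of 0 "2 * a" "[]"] by (simp add: nu_of_run_nu run_nu_Nil)
    ultimately show ?thesis using yeq True Hy by simp
  next
    case False
    then obtain p z bs where bl: "blocks y1 = (p, z) # bs" and y1: "unblock ((p, z) # bs) = y1"
      and nz: "\<forall>q\<in>set ((p, z) # bs). fst q \<noteq> 0"
      by (rule blocks_dropWhile[OF y1_def])
    define c where "c = inner_nu z bs + last_run z bs mod 2"
    have nu: "nu_of y = a + c"
      using yeq y1 run_nu_unblock[OF nz, of "2 * a"] by (simp add: nu_of_run_nu run_nu_zeros c_def)
    note red = Hcyc_reduce_blocks[of p z bs, folded c_def, unfolded y1, OF nn1 ev1]
    show ?thesis
      using alg_step_blocks[OF bl[unfolded y1_def]] red yeq nu Hy by (auto simp: diff_diff_add)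
  qed
  then show "length (alg_step y) + 2 * nu_of y = length y" "nonneg (alg_step y)"
    "nu_of y \<le> k \<Longrightarrow> Hcyc y k = Hcyc (alg_step y) (k - nu_of y)" by blast+
qed

section \<open>The highest weight condition is preserved\<close>

(* alternating sum  x_1 - x_2 + x_3 - ... ; highest weight = nonnegative on even prefixes *)
fun alt_sum :: "real list \<Rightarrow> real" where
  "alt_sum [] = 0"
| "alt_sum (a # l) = a - alt_sum l"

definition hw_alt :: "real list \<Rightarrow> bool" where
  "hw_alt l \<longleftrightarrow> (\<forall>j. even j \<longrightarrow> j \<le> length l \<longrightarrow> alt_sum (take j l) \<ge> 0)"

lemma alt_sum_append:
  "alt_sum (l1 @ l2) = alt_sum l1 + (if even (length l1) then alt_sum l2 else - alt_sum l2)"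
  by (induction l1) auto

lemma alt_sum_zeros: "alt_sum (replicate n 0 @ l) = (if even n then alt_sum l else - alt_sum l)"
  by (induction n) auto

lemma alt_sum_take_pairs:
  "2 * k \<le> length A \<Longrightarrow> alt_sum (take (2 * k) A) = (\<Sum>i=1..k. A ! (2 * i - 2) - A ! (2 * i - 1))"
proof (induction k)
  case (Suc k)
  have "take (2 * Suc k) A = take (2 * k) A @ [A ! (2 * k), A ! (2 * k + 1)]"
    using Suc.prems take_Suc_conv_app_nth[of "Suc (2 * k)" A] take_Suc_conv_app_nth[of "2 * k" A]
    by simp
  then show ?case using Suc by (simp add: alt_sum_append)
qed simp

lemma highest_weight_hw_alt: "highest_weight A \<Longrightarrow> even (length A) \<Longrightarrow> hw_alt A"
  unfolding hw_alt_def
proof (intro allI impI)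
  fix j assume hw: "highest_weight A" and ev: "even (length A)" and j: "even j" "j \<le> length A"
  then obtain k where k: "j = 2 * k" by (auto elim!: evenE)
  show "alt_sum (take j A) \<ge> 0"
  proof (cases "k = 0")
    case False
    hence "k \<in> {1..length A div 2}" using k j ev by auto
    then show ?thesis using hw alt_sum_take_pairs[of k A] k j unfolding highest_weight_def by simp
  qed (simp add: k)
qed

lemma hw_alt_shift: "hw_alt (map (\<lambda>v. v - c) x) = hw_alt x"
proof -
  have "alt_sum (map (\<lambda>v. v - c) l) = alt_sum l - (if odd (length l) then c else 0)" for l
    by (induction l) auto
  thus ?thesis unfolding hw_alt_def by (auto simp: take_map)
qed

(* an odd leading zero run would make the prefix 0,...,0,x negative *)
lemma hw_alt_leading_zeros:
  assumes h: "hw_alt y" and nn: "nonneg y" and ev: "even (length y)"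
  shows "even (length (takeWhile (\<lambda>v. v = 0) y))"
proof (rule ccontr)
  let ?n = "length (takeWhile (\<lambda>v. v = 0) y)"
  assume od: "odd ?n"
  have lt: "?n < length y" using length_takeWhile_le[of _ y] od ev by (metis le_neq_implies_less)
  have pos: "y ! ?n > 0"
    using nth_length_takeWhile[OF lt] nn lt by (metis nth_mem order_le_less)
  have "take (Suc ?n) y = replicate ?n 0 @ [y ! ?n]"
    by (metis lt take_Suc_conv_app_nth takeWhile_eq_take takeWhile_zero)
  hence "alt_sum (take (Suc ?n) y) = - y ! ?n" using od by (simp add: alt_sum_zeros)
  moreover have "alt_sum (take (Suc ?n) y) \<ge> 0" using h od lt unfolding hw_alt_def by auto
  ultimately show False using pos by simp
qed

lemma hw_alt_drop_zeros: "hw_alt (replicate (2 * a) 0 @ y) \<Longrightarrow> hw_alt y"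
  unfolding hw_alt_def
proof (intro allI impI)
  fix j assume h: "\<forall>j. even j \<longrightarrow> j \<le> length (replicate (2 * a) 0 @ y) \<longrightarrow>
      alt_sum (take j (replicate (2 * a) 0 @ y)) \<ge> 0" and j: "even j" "j \<le> length y"
  have "alt_sum (take (2 * a + j) (replicate (2 * a) 0 @ y)) \<ge> 0"
    using h[rule_format, of "2 * a + j"] j by simp
  then show "alt_sum (take j y) \<ge> 0" by (simp add: alt_sum_zeros)
qed

lemma alt_sum_grp_prefix:
  "j \<le> length (grp acc z bs) \<Longrightarrow> \<exists>j'\<le>length (acc # replicate z 0 @ unblock bs).
      even (j + j') \<and> alt_sum (take j (grp acc z bs)) = alt_sum (take j' (acc # replicate z 0 @ unblock bs))"
proof (induction acc z bs arbitrary: j rule: grp.induct)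
  case (1 acc z)
  then show ?case by (intro exI[of _ j]) (cases j, auto)
next
  case (2 acc z p z' bs)
  let ?R = "replicate z' 0 @ unblock bs"
  show ?case
  proof (cases "odd z")
    case True
    obtain j1 where j1: "j1 \<le> length ((acc + p) # ?R)" "even (j + j1)"
      "alt_sum (take j (grp (acc + p) z' bs)) = alt_sum (take j1 ((acc + p) # ?R))"
      using 2(1)[OF True, of j] 2(3) True by auto
    show ?thesis
    proof (cases j1)
      case 0
      then show ?thesis using j1 True by (intro exI[of _ 0]) auto
    next
      case (Suc i)
      have "alt_sum (take (j1 + z + 1) (acc # replicate z 0 @ unblock ((p, z') # bs)))
          = alt_sum (take j1 ((acc + p) # ?R))"
        using Suc True by (simp add: alt_sum_zeros)
      moreover have "even (j + (j1 + z + 1))" using j1(2) True by presburger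
      ultimately show ?thesis using j1 True by (intro exI[of _ "j1 + z + 1"]) auto
    qed
  next
    case False
    show ?thesis
    proof (cases j)
      case (Suc i)
      obtain j1 where j1: "j1 \<le> length (p # ?R)" "even (i + j1)"
        "alt_sum (take i (grp p z' bs)) = alt_sum (take j1 (p # ?R))"
        using 2(2)[OF False, of i] 2(3) False Suc by auto
      have "alt_sum (take (1 + z + j1) (acc # replicate z 0 @ unblock ((p, z') # bs)))
          = alt_sum (take j (grp acc z ((p, z') # bs)))"
        using Suc False j1(3) by (simp add: alt_sum_zeros)
      moreover have "even (j + (1 + z + j1))" using j1(2) False Suc by presburger
      ultimately show ?thesis using j1(1) by (intro exI[of _ "1 + z + j1"]) auto
    qed (intro exI[of _ 0], auto)
  qed
qed

lemma hw_alt_grp: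
  assumes h: "hw_alt (acc # replicate z 0 @ unblock bs)"
  shows "hw_alt (grp acc z bs)"
  unfolding hw_alt_def
proof (intro allI impI)
  fix j assume j: "even j" "j \<le> length (grp acc z bs)"
  then obtain j' where "j' \<le> length (acc # replicate z 0 @ unblock bs)" "even (j + j')"
    "alt_sum (take j (grp acc z bs)) = alt_sum (take j' (acc # replicate z 0 @ unblock bs))"
    using alt_sum_grp_prefix by blast
  then show "alt_sum (take j (grp acc z bs)) \<ge> 0" using h j unfolding hw_alt_def by auto
qed

(* wrapping adds the nonnegative last entry to every nonempty even prefix *)
lemma hw_alt_wrap_last:
  assumes h: "hw_alt gs" and nn: "nonneg gs"
  shows "hw_alt (wrap_last gs)"
proof (cases "butlast gs")
  case (Cons g gs')
  then obtain l where gs: "gs = (g # gs') @ [l]"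
    by (metis append_butlast_last_id list.distinct(1) butlast.simps(1))
  show ?thesis unfolding hw_alt_def
  proof (intro allI impI)
    fix j assume j: "even j" "j \<le> length (wrap_last gs)"
    show "alt_sum (take j (wrap_last gs)) \<ge> 0"
    proof (cases j)
      case (Suc i)
      have "alt_sum (take j (wrap_last gs)) = alt_sum (take j gs) + l"
        using gs Suc j by (simp add: wrap_last_def length_wrap_last)
      moreover have "alt_sum (take j gs) \<ge> 0" using h j gs by (simp add: hw_alt_def length_wrap_last)
      ultimately show ?thesis using nn gs by simp
    qed simp
  qed
qed (simp add: wrap_last_def hw_alt_def)

lemma hw_alt_alg_step:
  assumes nn: "nonneg y" and ev: "even (length y)" and h: "hw_alt y"
  shows "hw_alt (alg_step y)"
proof -
  define y1 where "y1 = dropWhile (\<lambda>v. v = 0) y"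
  obtain a where yeq: "y = replicate (2 * a) 0 @ y1"
    using split_leading_zeros[OF hw_alt_leading_zeros[OF h nn ev]] y1_def by blast
  have h1: "hw_alt y1" using h unfolding yeq by (rule hw_alt_drop_zeros)
  show ?thesis
  proof (cases "y1 = []")
    case True
    then show ?thesis by (simp add: alg_step_def y1_def[symmetric] hw_alt_def)
  next
    case False
    then obtain p z bs where bl: "blocks y1 = (p, z) # bs" and y1: "unblock ((p, z) # bs) = y1"
      and "\<forall>q\<in>set ((p, z) # bs). fst q \<noteq> 0"
      by (rule blocks_dropWhile[OF y1_def])
    have y1': "y1 = p # replicate z 0 @ unblock bs" using y1 by simp
    have "nonneg y1" using nn yeq by simp
    hence "nonneg (grp p z bs)" using y1' by (intro grp_nonneg) auto
    moreover have "hw_alt (grp p z bs)" using h1 y1' by (intro hw_alt_grp) simp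
    ultimately have "hw_alt (wrap_last (grp p z bs))" "hw_alt (grp p z bs)"
      using hw_alt_wrap_last by blast+
    then show ?thesis using alg_step_blocks[OF bl[unfolded y1_def]] by (simp add: reduce_blocks_def)
  qed
qed

section \<open>The recursion over the rounds of Algorithm I\<close>

lemma lambdas_nth: "i < length ps \<Longrightarrow> lambdas ps ! i = (\<Sum>l<Suc i. fst (ps ! l))"
  by (simp add: lambdas_def)

lemma lambdas_Cons_Suc:
  assumes "i < length ps"
  shows "lambdas (q # ps) ! Suc i = fst q + lambdas ps ! i"
proof -
  have "lambdas (q # ps) ! Suc i = (\<Sum>l<Suc (Suc i). fst ((q # ps) ! l))"
    using assms by (intro lambdas_nth) simp
  also have "\<dots> = fst q + (\<Sum>l<Suc i. fst (ps ! l))"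
    by (subst sum.lessThan_Suc_shift) simp
  also have "\<dots> = fst q + lambdas ps ! i" using assms by (simp add: lambdas_nth)
  finally show ?thesis .
qed

lemma ell_list_Cons:
  "ell_list (q # ps) = replicate (snd q) (fst q) @ map (\<lambda>v. fst q + v) (ell_list ps)"
proof -
  define h where "h = (\<lambda>i. replicate (snd ((q # ps) ! i)) (lambdas (q # ps) ! i))"
  have "[0..<length (q # ps)] = 0 # map Suc [0..<length ps]"
    by (simp only: length_Cons upt_conv_Cons[OF zero_less_Suc] map_Suc_upt)
  hence "ell_list (q # ps) = h 0 @ concat (map (\<lambda>i. h (Suc i)) [0..<length ps])"
    unfolding ell_list_def h_def by (simp add: map_map o_def)
  also have "h 0 = replicate (snd q) (fst q)" by (simp add: h_def lambdas_nth)
  also have "map (\<lambda>i. h (Suc i)) [0..<length ps]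
      = map (\<lambda>i. map (\<lambda>v. fst q + v) (replicate (snd (ps ! i)) (lambdas ps ! i))) [0..<length ps]"
    unfolding h_def by (intro map_cong) (auto simp: lambdas_Cons_Suc)
  also have "concat \<dots> = map (\<lambda>v. fst q + v) (ell_list ps)"
    unfolding ell_list_def by (simp add: map_concat map_map o_def)
  finally show ?thesis .
qed

lemma sum_prefix_append:
  "(\<Sum>j<k. (R @ L) ! j) = (\<Sum>j<min k (length R). R ! j) + (\<Sum>j<k - length R. L ! j)"
proof (induction k)
  case (Suc k)
  then show ?case
    by (cases "k < length R") (auto simp: nth_append min_def Suc_diff_le not_less add.assoc)
qed simp

(* prefix sums of ell_list obey the same recursion as Hcyc (lemma Hcyc_round) *)
lemma ell_list_prefix_Cons:
  assumes "k \<le> \<nu> + length (ell_list ps)"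
  shows "(\<Sum>j<k. ell_list ((\<mu>, \<nu>) # ps) ! j)
       = real k * \<mu> + (if k \<le> \<nu> then 0 else (\<Sum>j<k - \<nu>. ell_list ps ! j))"
proof -
  have rep: "(\<Sum>j<min k \<nu>. replicate \<nu> \<mu> ! j) = real (min k \<nu>) * \<mu>" by simp
  have "(\<Sum>j<k - \<nu>. map (\<lambda>v. \<mu> + v) (ell_list ps) ! j)
      = (\<Sum>j<k - \<nu>. \<mu> + ell_list ps ! j)"
    using assms by (intro sum.cong) auto
  then show ?thesis using rep
    by (simp add: ell_list_Cons sum_prefix_append sum.distrib min_def of_nat_diff algebra_simps)
qed

lemma Hcyc_round:
  fixes x :: "real list"
  assumes lx: "length x = 2 * M" and M1: "M \<ge> 1" and hx: "hw_alt x"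
    and \<mu>_def: "\<mu> = Min (set x)" and y_def: "y = map (\<lambda>v. v - \<mu>) x" and \<nu>_def: "\<nu> = nu_of y"
  shows "1 \<le> \<nu>" and "\<nu> \<le> M" and "length (alg_step y) = 2 * (M - \<nu>)"
    and "hw_alt (alg_step y)"
    and "k \<le> M \<Longrightarrow> Hcyc x k = real k * \<mu> + (if k \<le> \<nu> then 0 else Hcyc (alg_step y) (k - \<nu>))"
proof -
  have xne: "x \<noteq> []" using lx M1 by auto
  have nn: "nonneg y" unfolding y_def \<mu>_def by auto
  have "0 \<in> set y" unfolding y_def \<mu>_def using Min_in[of "set x"] xne by force
  then show "1 \<le> \<nu>" using run_nu_pos[of 0 y] by (simp add: nu_of_run_nu \<nu>_def)
  have hy: "hw_alt y" unfolding y_def using hx hw_alt_shift by simp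
  have ly: "length y = 2 * M" using lx y_def by simp
  have lead: "even (length (takeWhile (\<lambda>v. v = 0) y))"
    using hw_alt_leading_zeros[OF hy nn] ly by simp
  note step = Hcyc_alg_step[OF nn _ lead]
  show "\<nu> \<le> M" "length (alg_step y) = 2 * (M - \<nu>)"
    using step(1) ly \<nu>_def by auto
  show "hw_alt (alg_step y)" using hw_alt_alg_step[OF nn _ hy] ly by simp
  assume k: "k \<le> M"
  have shift: "Hcyc x k = Hcyc y k + real k * \<mu>"
    using Hcyc_shift[of k x \<mu>] lx k y_def by simp
  show "Hcyc x k = real k * \<mu> + (if k \<le> \<nu> then 0 else Hcyc (alg_step y) (k - \<nu>))"
  proof (cases "k \<le> \<nu>")
    case True
    (* the first nu positions can all be placed on zeros of y *)
    have "Hcyc y k \<le> Hcyc y \<nu>"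
      using Hcyc_mono[OF nn True] step(1) ly \<nu>_def by simp
    also have "\<dots> = 0" using step ly Hcyc_zero \<nu>_def by simp
    finally have "Hcyc y k = 0" using Hcyc_nonneg[OF nn] k ly by (simp add: antisym)
    then show ?thesis using True shift by simp
  next
    case False
    then show ?thesis using shift step(3) ly \<nu>_def by simp
  qed
qed

lemma algI_prefix_sums:
  "length x = 2 * M \<Longrightarrow> 1 \<le> M \<Longrightarrow> M \<le> f \<Longrightarrow> hw_alt x \<Longrightarrow>
   length (ell_list (algI f x)) = M \<and> (\<forall>k\<le>M. (\<Sum>j<k. ell_list (algI f x) ! j) = Hcyc x k)"
proof (induction f arbitrary: x M)
  case (Suc f)
  define \<mu> where "\<mu> = Min (set x)"
  define y where "y = map (\<lambda>v. v - \<mu>) x"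
  define \<nu> where "\<nu> = nu_of y"
  note round = Hcyc_round[OF Suc.prems(1,2,4) \<mu>_def y_def \<nu>_def]
  show ?case
  proof (cases "\<nu> = M")
    case True
    have "algI (Suc f) x = [(\<mu>, \<nu>)]"
      using True Suc.prems(1) by (simp add: Let_def \<mu>_def y_def \<nu>_def)
    moreover have "ell_list [(\<mu>, \<nu>)] = replicate M \<mu>"
      using True ell_list_Cons[of "(\<mu>, \<nu>)" "[]"] by (simp add: ell_list_def)
    moreover have "Hcyc x k = real k * \<mu>" if "k \<le> M" for k
      using round(5)[OF that] that True by simp
    ultimately show ?thesis using True by simp
  next
    case False
    have alg: "algI (Suc f) x = (\<mu>, \<nu>) # algI f (alg_step y)"
      using False round(2) Suc.prems(1) by (simp add: Let_def \<mu>_def y_def \<nu>_def)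
    have IH: "length (ell_list (algI f (alg_step y))) = M - \<nu>"
      "\<And>k. k \<le> M - \<nu> \<Longrightarrow> (\<Sum>j<k. ell_list (algI f (alg_step y)) ! j) = Hcyc (alg_step y) k"
      using Suc.IH[OF round(3) _ _ round(4)] False round(1,2) Suc.prems(3) by auto
    have "length (ell_list (algI (Suc f) x)) = M"
      using alg IH(1) round(2) by (simp add: ell_list_Cons)
    moreover have "(\<Sum>j<k. ell_list (algI (Suc f) x) ! j) = Hcyc x k" if "k \<le> M" for k
      using that alg IH round(2,5) ell_list_prefix_Cons[of k \<nu> "algI f (alg_step y)" \<mu>] by simp
    ultimately show ?thesis by blast
  qed
qed simp

section \<open>Admissible tuples are cyclically independent masks\<close>

lemma admissible_iff_gapped:
  "admissible N k I \<longleftrightarrow> length I = k \<and> set I \<subseteq> {1..2 * N}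
     \<and> sorted_wrt (\<lambda>i j. i + 1 < j) I \<and> \<not> (hd I = 1 \<and> last I = 2 * N)"
proof -
  have "sorted_wrt (\<lambda>i j. i + 1 < j) I \<longleftrightarrow> (\<forall>j. Suc j < length I \<longrightarrow> I ! j + 1 < I ! Suc j)"
    by (rule sorted_wrt_iff_nth_Suc_transp) (auto simp: transp_def)
  then show ?thesis unfolding admissible_def by auto
qed

lemma no_adj_nth: "no_adj M \<longleftrightarrow> (\<forall>i. Suc i < length M \<longrightarrow> \<not> (M ! i \<and> M ! Suc i))"
proof (induction M rule: no_adj.induct)
  case (1 a b l)
  have "(\<forall>i. Suc i < length (a # b # l) \<longrightarrow> \<not> ((a # b # l) ! i \<and> (a # b # l) ! Suc i))
      \<longleftrightarrow> \<not> (a \<and> b) \<and> (\<forall>i. Suc i < length (b # l) \<longrightarrow> \<not> ((b # l) ! i \<and> (b # l) ! Suc i))"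
    (is "(\<forall>i. ?P i) \<longleftrightarrow> _")
  proof -
    have "(\<forall>i. ?P i) \<longleftrightarrow> ?P 0 \<and> (\<forall>i. ?P (Suc i))" by (metis not0_implies_Suc)
    thus ?thesis by simp
  qed
  then show ?case using 1 by simp
qed auto

lemma mweight_selected:
  "length M = length y \<Longrightarrow> mweight M y = (\<Sum>i\<in>{i. i < length y \<and> M ! i}. y ! i)"
proof -
  assume l: "length M = length y"
  have "{i. i < length y \<and> M ! i} = {..<length y} \<inter> {i. M ! i}" by auto
  then show ?thesis using l
    by (simp add: mweight_def sum_list_sum_nth atLeast0LessThan sum.inter_restrict)
qed

lemma mcount_selected: "mcount M = card {i. i < length M \<and> M ! i}"
  by (simp add: mcount_def length_filter_conv_card)

lemma gapped_no_succ:
  assumes "sorted_wrt (\<lambda>i j. i + 1 < j) I" "a \<in> set I" "Suc a \<in> set I"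
  shows False
proof -
  obtain p q where "p < length I" "I ! p = a" "q < length I" "I ! q = Suc a"
    using assms(2,3) by (metis in_set_conv_nth)
  then show False using sorted_wrt_nth_less[OF assms(1)] by (cases p q rule: linorder_cases) force+
qed

lemma gapped_hd_last:
  fixes I :: "nat list"
  assumes "sorted_wrt (\<lambda>i j. i + 1 < j) I" "x \<in> set I"
  shows "hd I \<le> x" and "x \<le> last I"
proof -
  have "I \<noteq> []" using assms(2) by auto
  then obtain a l where "I = a # l" by (cases I) auto
  then show "hd I \<le> x" using assms by auto
  have I: "I = butlast I @ [last I]" using \<open>I \<noteq> []\<close> by simp
  hence "\<forall>y\<in>set (butlast I). y + 1 < last I"
    using assms(1) sorted_wrt_append[of _ "butlast I" "[last I]"] by (metis list.set_intros(1))
  then show "x \<le> last I" using assms(2) I by (metis Un_iff empty_iff insert_iff le_refl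
      less_imp_le_nat add_lessD1 set_append list.set)
qed

lemma selected_gapped:
  assumes "cyc_indep M"
  shows "sorted_wrt (\<lambda>i j. i + 1 < j) (filter (\<lambda>i. M ! i) [0..<length M])"
proof (rule sorted_wrt_mono_rel[of _ "(<)"])
  fix i j assume ij: "i \<in> set (filter (\<lambda>i. M ! i) [0..<length M])"
    "j \<in> set (filter (\<lambda>i. M ! i) [0..<length M])" "i < j"
  have "j \<noteq> Suc i"
  proof
    assume "j = Suc i"
    then have "M ! i" "M ! Suc i" "Suc i < length M" using ij by auto
    then show False using assms unfolding cyc_indep_def no_adj_nth by blast
  qed
  then show "i + 1 < j" using ij(3) by simp
qed (simp add: sorted_wrt_filter)

lemma admissible_mask:
  assumes ad: "admissible N k I" and N1: "N \<ge> 1" and lA: "length A = 2 * N"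
  defines "M \<equiv> map (\<lambda>i. Suc i \<in> set I) [0..<2 * N]"
  shows "M \<in> masks A k" and "mweight M A = (\<Sum>i\<leftarrow>I. A ! (i - 1))"
proof -
  have lI: "length I = k" and sI: "set I \<subseteq> {1..2 * N}" and gap: "sorted_wrt (\<lambda>i j. i + 1 < j) I"
    and nhl: "\<not> (hd I = 1 \<and> last I = 2 * N)"
    using ad by (auto simp: admissible_iff_gapped)
  have dI: "distinct I"
    using sorted_wrt_mono_rel[OF _ gap, of "(<)"] strict_sorted_iff by auto
  have sel: "{i. i < length M \<and> M ! i} = {i. i < 2 * N \<and> Suc i \<in> set I}" by (auto simp: M_def)
  have img: "Suc ` {i. i < 2 * N \<and> Suc i \<in> set I} = set I"
  proof (intro set_eqI iffI)
    fix x assume x: "x \<in> set I"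
    hence "1 \<le> x" "x \<le> 2 * N" using sI by auto
    then show "x \<in> Suc ` {i. i < 2 * N \<and> Suc i \<in> set I}"
      using x by (intro image_eqI[of _ _ "x - 1"]) auto
  qed auto
  have "no_adj M" unfolding no_adj_nth
    using gapped_no_succ[OF gap] by (auto simp: M_def)
  moreover have "\<not> (hd M \<and> last M)"
  proof
    assume "hd M \<and> last M"
    hence "1 \<in> set I" "2 * N \<in> set I" using N1 by (auto simp: M_def hd_map last_map)
    moreover from this have "I \<noteq> []" by auto
    hence "hd I \<in> set I" "last I \<in> set I" by auto
    ultimately have "hd I = 1" "last I = 2 * N"
      using gapped_hd_last[OF gap] sI by (meson atLeastAtMost_iff le_antisym subsetD)+
    then show False using nhl by simp
  qed
  moreover have "mcount M = k"
    using mcount_selected sel img card_image[of Suc] distinct_card[OF dI] lI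
    by (metis inj_Suc inj_on_subset subset_UNIV)
  ultimately show "M \<in> masks A k" using lA by (simp add: masks_def cyc_indep_def M_def)
  have "(\<Sum>i\<leftarrow>I. A ! (i - 1)) = (\<Sum>i\<in>Suc ` {i. i < 2 * N \<and> Suc i \<in> set I}. A ! (i - 1))"
    using dI img by (simp add: sum_list_distinct_conv_sum_set)
  also have "\<dots> = mweight M A"
    using mweight_selected[of M A] sel lA by (simp add: sum.reindex M_def)
  finally show "mweight M A = (\<Sum>i\<leftarrow>I. A ! (i - 1))" ..
qed

lemma mask_admissible:
  assumes M: "M \<in> masks A k" and k1: "k \<ge> 1" and lA: "length A = 2 * N"
  defines "I \<equiv> map Suc (filter (\<lambda>i. M ! i) [0..<2 * N])"
  shows "admissible N k I" and "(\<Sum>i\<leftarrow>I. A ! (i - 1)) = mweight M A"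
proof -
  define F where "F = filter (\<lambda>i. M ! i) [0..<2 * N]"
  have I: "I = map Suc F" by (simp add: I_def F_def)
  have lM: "length M = 2 * N" and cyc: "cyc_indep M" and cM: "mcount M = k"
    using M lA by (auto simp: masks_def)
  have sF: "set F = {i. i < 2 * N \<and> M ! i}" and dF: "distinct F" by (auto simp: F_def)
  have lF: "length F = k"
    using distinct_card[OF dF] sF mcount_selected[of M] cM lM by simp
  have "sorted_wrt (\<lambda>i j. i + 1 < j) F"
    using selected_gapped[OF cyc] lM by (simp add: F_def)
  hence gap: "sorted_wrt (\<lambda>i j. i + 1 < j) I" by (simp add: I sorted_wrt_map)
  have "\<not> (hd I = 1 \<and> last I = 2 * N)"
  proof
    assume h: "hd I = 1 \<and> last I = 2 * N"
    have "F \<noteq> []" using lF k1 by auto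
    hence "hd F = 0" "last F = 2 * N - 1" using h by (auto simp: I hd_map last_map)
    hence "0 \<in> set F" "2 * N - 1 \<in> set F"
      using hd_in_set[of F] last_in_set[of F] \<open>F \<noteq> []\<close> by auto
    hence "M ! 0" "M ! (2 * N - 1)" "M \<noteq> []" using lM unfolding sF by auto
    hence "hd M \<and> last M" using lM by (simp add: hd_conv_nth last_conv_nth)
    then show False using cyc \<open>M \<noteq> []\<close> unfolding cyc_indep_def by blast
  qed
  moreover have "set I \<subseteq> {1..2 * N}"
  proof
    fix x assume "x \<in> set I"
    then obtain i where "i \<in> set F" "x = Suc i" by (auto simp: I)
    then show "x \<in> {1..2 * N}" unfolding sF by simp
  qed
  ultimately show "admissible N k I" unfolding admissible_iff_gapped using gap lF by (simp add: I)
  have "(\<Sum>i\<leftarrow>I. A ! (i - 1)) = (\<Sum>i\<leftarrow>F. A ! i)" by (simp add: I o_def)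
  also have "\<dots> = (\<Sum>i\<in>set F. A ! i)" using dF by (rule sum_list_distinct_conv_sum_set)
  also have "\<dots> = mweight M A" using mweight_selected[of M A] lM lA sF by simp
  finally show "(\<Sum>i\<leftarrow>I. A ! (i - 1)) = mweight M A" .
qed

lemma H_eq_Hcyc:
  assumes lA: "length A = 2 * N" and N1: "N \<ge> 1" and k1: "k \<ge> 1"
  shows "H A N k = Hcyc A k"
proof -
  have "{(\<Sum>i\<leftarrow>I. A ! (i - 1)) | I. admissible N k I} = (\<lambda>M. mweight M A) ` masks A k"
  proof (intro set_eqI iffI)
    fix w assume "w \<in> {(\<Sum>i\<leftarrow>I. A ! (i - 1)) | I. admissible N k I}"
    then obtain I where "w = (\<Sum>i\<leftarrow>I. A ! (i - 1))" "admissible N k I" by blast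
    then show "w \<in> (\<lambda>M. mweight M A) ` masks A k"
      using admissible_mask[OF _ N1 lA] by (metis image_eqI)
  next
    fix w assume "w \<in> (\<lambda>M. mweight M A) ` masks A k"
    then obtain M where w: "w = mweight M A" and M: "M \<in> masks A k" by blast
    then show "w \<in> {(\<Sum>i\<leftarrow>I. A ! (i - 1)) | I. admissible N k I}"
      using mask_admissible[OF M k1 lA] by (intro CollectI exI[of _ "map Suc (filter ((!) M) [0..<2 * N])"]) simp
  qed
  then show ?thesis unfolding H_def Hcyc_def by simp
qed

theorem mainTheorem7:
  fixes A :: "real list" and N :: nat
  assumes "N \<ge> 1"
    and "length A = 2 * N"
    and "\<forall>a\<in>set A. a > 0"
    and "(\<Sum>l=1..N. A ! (2*l - 1)) < (\<Sum>l=1..N. A ! (2*l - 2))"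
    and "highest_weight A"
  shows "length (ell_list (algI N A)) = N
     \<and> (\<forall>k\<in>{1..N}. (\<Sum>j<k. ell_list (algI N A) ! j) = H A N k)"
proof -
  have "hw_alt A" using highest_weight_hw_alt assms(2,5) by simp
  then have sums: "length (ell_list (algI N A)) = N"
    "\<forall>k\<le>N. (\<Sum>j<k. ell_list (algI N A) ! j) = Hcyc A k"
    using algI_prefix_sums[OF assms(2,1) order_refl] by blast+
  have "(\<Sum>j<k. ell_list (algI N A) ! j) = H A N k" if "k \<in> {1..N}" for k
    using that sums(2) H_eq_Hcyc[OF assms(2,1), of k] by simp
  then show ?thesis using sums(1) by blast
qed

end
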